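(* Let $l_n,R_n>0$ ($n\in\mathbb N$) satisfy $l_n,R_n\to\infty$, $l_n^2/n\to0$, $n/R_n\to0$, $e^{-\pi l_n/2}R_n\to0$, and let $W_n(z)=\exp\!\big(-l_n\pi-il_n\log\frac{z-n}{z+n}\big)$ for $z\in\mathbb C_+$. Then $W_n(z)\to1$ as $n\to\infty$ uniformly on each compact set $K\subset\mathbb C_+$.
   Context: $\mathbb C_+=\{\operatorname{Im}z>0\}$. For $z\in\mathbb C_+$ one has $\frac{z-n}{z+n}\in\mathbb C_+$, and $\log$ denotes the branch with imaginary part in $(0,\pi)$. *)

theory Defs
  imports "HOL-Analysis.Analysis"
begin

(* For z in the upper half plane, (z-n)/(z+n) lies in the upper half plane, where the
   principal logarithm Ln has imaginary part in (0,pi); so Ln is the branch of the paper. *)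
definition W :: "(nat \<Rightarrow> real) \<Rightarrow> nat \<Rightarrow> complex \<Rightarrow> complex" where
  "W l n z = exp (- complex_of_real (l n * pi)
                  - \<i> * complex_of_real (l n) * Ln ((z - of_nat n) / (z + of_nat n)))"

end

theory Submission
  imports Defs "HOL-Complex_Analysis.Weierstrass_Factorization"
begin

(* For Im z > 0 the point (n - z)/(n + z) lies in the lower half plane, so
   Ln ((z - n)/(z + n)) = Ln ((n - z)/(n + z)) + i pi and the factor exp (- l_n pi) cancels:
   W_n z = exp (- i l_n Ln ((n - z)/(n + z))). Since (n - z)/(n + z) = 1 - 2 z/(n + z) is within
   4 |z|/n of 1, its logarithm is at most 8 |z|/n, whence |W_n z - 1| <= 12 l_n |z|/n for large n.
   This tends to 0 uniformly on bounded sets because l_n/n -> 0, which already follows from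
   l_n^2/n -> 0. *)

lemma Im_cayley_neg:
  fixes c :: real and z :: complex
  assumes "c > 0" and "Im z > 0"
  shows "Im ((c - z) / (c + z)) < 0"
proof -
  have "Im ((c - z) / (c + z)) = - 2 * c * Im z / ((c + Re z)\<^sup>2 + (Im z)\<^sup>2)"
    by (simp add: Im_divide algebra_simps)
  moreover have "(c + Re z)\<^sup>2 + (Im z)\<^sup>2 > 0"
    using assms(2) by (simp add: add_nonneg_pos)
  ultimately show ?thesis
    using assms by (simp add: divide_neg_pos)
qed

lemma W_eq_exp_Ln_cayley:
  assumes "n > 0" and "Im z > 0"
  shows "W l n z = exp (- \<i> * of_real (l n) * Ln ((of_nat n - z) / (of_nat n + z)))"
proof -
  define u where "u = (of_nat n - z) / (of_nat n + z)"
  have "Im u < 0"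
    unfolding u_def using Im_cayley_neg[of "real n" z] assms by simp
  then have "Ln (- u) = Ln u + \<i> * pi"
    by (subst Ln_minus) auto
  moreover have "(z - of_nat n) / (z + of_nat n) = - u"
    unfolding u_def by (simp add: add.commute minus_divide_left)
  ultimately show ?thesis
    unfolding W_def u_def by (simp add: algebra_simps)
qed

lemma norm_cayley_minus_one_le:
  fixes c :: real and z :: complex
  assumes "c > 0" and "2 * norm z \<le> c"
  shows "norm ((c - z) / (c + z) - 1) \<le> 4 * norm z / c"
proof -
  have "c / 2 \<le> norm (of_real c :: complex) - norm z"
    using assms by simp
  also have "\<dots> \<le> norm (c + z)"
    by (rule norm_diff_ineq)
  finally have den: "c / 2 \<le> norm (c + z)" .
  then have "c + z \<noteq> 0"
    using assms(1) by auto
  then have "(c - z) / (c + z) - 1 = - 2 * z / (c + z)"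
    by (simp add: field_simps)
  also have "norm \<dots> = 2 * norm z / norm (c + z)"
    by (simp add: norm_divide norm_mult)
  also have "\<dots> \<le> 2 * norm z / (c / 2)"
    using den assms(1) by (intro frac_le) auto
  finally show ?thesis
    by simp
qed

lemma norm_Ln_cayley_le:
  fixes c :: real and z :: complex
  assumes "c > 0" and "8 * norm z < c"
  shows "norm (Ln ((c - z) / (c + z))) \<le> 8 * norm z / c"
proof -
  define v where "v = (c - z) / (c + z) - 1"
  have v: "norm v \<le> 4 * norm z / c"
    unfolding v_def using assms by (intro norm_cayley_minus_one_le) auto
  also have "\<dots> < 1 / 2"
    using assms by (simp add: field_simps)
  finally have "norm (Ln (1 + v)) \<le> 2 * norm v"
    by (rule norm_Ln_le)
  then show ?thesis
    using v by (simp add: v_def)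
qed

lemma norm_W_minus_one_le:
  assumes "n > 0" and "Im z > 0" and "l n \<ge> 0"
    and "8 * norm z < real n" and "16 * l n * norm z \<le> real n"
  shows "norm (W l n z - 1) \<le> 12 * l n * norm z / real n"
proof -
  define a where "a = - \<i> * of_real (l n) * Ln ((of_nat n - z) / (of_nat n + z))"
  have "norm a = l n * norm (Ln ((of_nat n - z) / (of_nat n + z)))"
    unfolding a_def using assms(3) by (simp add: norm_mult)
  also have "\<dots> \<le> l n * (8 * norm z / real n)"
    using assms norm_Ln_cayley_le[of "real n" z] by (intro mult_left_mono) auto
  finally have a: "norm a \<le> 8 * l n * norm z / real n"
    using assms(1) by (simp add: field_simps)
  also have "\<dots> \<le> 1 / 2"
    using assms by (simp add: field_simps)
  finally have "norm (exp a - 1) \<le> 3 / 2 * norm a"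
    by (rule norm_exp_bounds)
  also have "\<dots> \<le> 12 * l n * norm z / real n"
    using a by linarith
  finally show ?thesis
    using W_eq_exp_Ln_cayley[OF assms(1,2), of l] by (simp add: a_def)
qed

lemma tendsto_div_real_of_nat_zero:
  fixes f :: "nat \<Rightarrow> real"
  assumes "(\<lambda>n. (f n)\<^sup>2 / real n) \<longlonglongrightarrow> 0"
  shows "(\<lambda>n. f n / real n) \<longlonglongrightarrow> 0"
proof -
  have "(\<lambda>n. sqrt ((f n)\<^sup>2 / real n * (1 / real n))) \<longlonglongrightarrow> sqrt (0 * 0)"
    by (intro tendsto_real_sqrt tendsto_mult assms lim_const_over_n)
  moreover have "(f n)\<^sup>2 / real n * (1 / real n) = (f n / real n)\<^sup>2" for n
    by (simp add: power_divide power2_eq_square)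
  ultimately have "(\<lambda>n. \<bar>f n / real n\<bar>) \<longlonglongrightarrow> 0"
    by (simp only: real_sqrt_abs mult_zero_left real_sqrt_zero)
  then show ?thesis
    by (rule tendsto_rabs_zero_cancel)
qed

lemma uniform_limit_by_bound:
  assumes "\<forall>\<^sub>F n in F. \<forall>x\<in>S. dist (f n x) (g x) \<le> b n" and "(b \<longlongrightarrow> 0) F"
  shows "uniform_limit S f g F"
proof (rule uniform_limitI)
  fix e :: real
  assume "e > 0"
  with assms(2) have "\<forall>\<^sub>F n in F. b n < e"
    by (rule order_tendstoD)
  with assms(1) show "\<forall>\<^sub>F n in F. \<forall>x\<in>S. dist (f n x) (g x) < e"
    by eventually_elim force
qed

theorem lemma3:
  fixes l R :: "nat \<Rightarrow> real"
  assumes l_pos: "\<And>n. l n > 0" and R_pos: "\<And>n. R n > 0"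
    and l_inf: "filterlim l at_top sequentially"
    and R_inf: "filterlim R at_top sequentially"
    and l2n: "(\<lambda>n. (l n)\<^sup>2 / real n) \<longlonglongrightarrow> 0"
    and nR: "(\<lambda>n. real n / R n) \<longlonglongrightarrow> 0"
    and expR: "(\<lambda>n. exp (- pi * l n / 2) * R n) \<longlonglongrightarrow> 0"
  shows "\<forall>K. compact K \<and> K \<subseteq> {z. Im z > 0} \<longrightarrow>
           uniform_limit K (\<lambda>n z. W l n z) (\<lambda>z. 1) sequentially"
proof (intro allI impI)
  fix K :: "complex set"
  assume K: "compact K \<and> K \<subseteq> {z. Im z > 0}"
  then obtain M where M: "M > 0" "\<And>z. z \<in> K \<Longrightarrow> norm z \<le> M"
    using compact_imp_bounded bounded_pos by metis
  have l_n: "(\<lambda>n. l n / real n) \<longlonglongrightarrow> 0"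
    using l2n by (rule tendsto_div_real_of_nat_zero)
  have "\<forall>\<^sub>F n in sequentially. 8 * M < real n"
    using filterlim_real_sequentially by (simp add: filterlim_at_top_dense)
  moreover have "\<forall>\<^sub>F n in sequentially. l n / real n < 1 / (16 * M)"
    using l_n M(1) by (intro order_tendstoD) auto
  ultimately have "\<forall>\<^sub>F n in sequentially. \<forall>z\<in>K. dist (W l n z) 1 \<le> 12 * M * (l n / real n)"
  proof eventually_elim
    case (elim n)
    show ?case
    proof
      fix z
      assume "z \<in> K"
      then have z: "Im z > 0" "norm z \<le> M"
        using K M(2) by auto
      have "n > 0"
        using elim(1) M(1) by (auto intro: Nat.gr0I)
      have "16 * l n * norm z \<le> 16 * l n * M"
        using z l_pos[of n] by simp
      also have "\<dots> \<le> real n"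
        using elim(2) M(1) \<open>n > 0\<close> by (simp add: field_simps)
      finally have "norm (W l n z - 1) \<le> 12 * l n * norm z / real n"
        using elim(1) z l_pos[of n] \<open>n > 0\<close> by (intro norm_W_minus_one_le) auto
      also have "\<dots> \<le> 12 * M * (l n / real n)"
        using z l_pos[of n] by (simp add: divide_right_mono)
      finally show "dist (W l n z) 1 \<le> 12 * M * (l n / real n)"
        by (simp add: dist_norm)
    qed
  qed
  moreover have "(\<lambda>n. 12 * M * (l n / real n)) \<longlonglongrightarrow> 0"
    using l_n by (rule tendsto_mult_right_zero)
  ultimately show "uniform_limit K (\<lambda>n z. W l n z) (\<lambda>z. 1) sequentially"
    by (rule uniform_limit_by_bound)
qed

end
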